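(* Every causal net is a single execution net: if $K=\langle S,T,F,I,R,\mathsf m,\ell\rangle$ is a causal net, then every state $X\in\mathrm{St}(K)$ is a set.
   Context: A (labelled contextual) Petri net is $N=\langle S,T,F,I,R,\mathsf m,\ell\rangle$ with disjoint places $S$ and transitions $T$, flow $F\subseteq(S\times T)\cup(T\times S)$, inhibitor arcs $I\subseteq S\times T$, read arcs $R\subseteq S\times T$, initial marking $\mathsf m$ (a multiset on $S$) and total labelling $\ell:T\to L$. Notation: ${}^\bullet x=\{y\mid(y,x)\in F\}$, $x^\bullet=\{y\mid(x,y)\in F\}$, ${}^\circ t=\{s\mid (s,t)\in I\}$, $\underline t=\{s\mid (s,t)\in R\}$; every transition has nonempty preset. $t$ is enabled at $m$ if ${}^\bullet t+\underline t\subseteq m$ and $m(s)=0$ for all $s\in{}^\circ t$; firing gives $m-{}^\bullet t+t^\bullet$. A state is the multiset $t_1+\dots+t_n$ of a finite firing sequence from $\mathsf m$; $\mathrm{St}(N)$ is the set of states, $\lfloor X\rfloor$ the support of $X$; a configuration is $\ell(X)$ for a state $X$. Standing assumption: all nets are safe (every reachable marking has at most one token per place). $<_N$ denotes the transitive closure of $F$. Define $t\prec_N t'$ iff ${}^\bullet t\cap{}^\circ t'\neq\emptyset$ or $t^\bullet\cap\underline{t'}\neq\emptyset$; and $t\ \#_N\ t'$ iff no state $X$ satisfies $\{t,t'\}\subseteq\lfloor X\rfloor$. $N$ is a pre-causal net if: (1) $<_N\cap(T\times T)=\emptyset$, and for all $t$: ${}^\bullet t\cap{}^\circ t=\emptyset$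 and $t^\bullet\cap\underline t=\emptyset$; (2) for all $t$ and $s\in{}^\circ t$, $|\ell(s^\bullet)|=1$; (3) $t\prec_N t'$ implies not $t'\prec_N t$; (4) ${}^\circ t\cup\underline t$ is finite for every $t$; (5) $t\ \#_N\ t'$ implies ${}^\bullet t\cap{}^\bullet t'\neq\emptyset$; (6) $t\neq t'$ and $\ell(t)=\ell(t')$ imply $t\ \#_N\ t'$. A causal net is a pre-causal net $K$ such that (a) for every $X\in\mathrm{St}(K)$ the reflexive transitive closure $\prec_K^{*}$ restricted to $\lfloor X\rfloor$ is a partial order, and (b) every $t\in T$ lies in $\lfloor X\rfloor$ for some state $X$. A net is single execution if every state is a set. *)

theory Defs
  imports "HOL-Library.Multiset"
begin

text \<open>Places and transitions live in one
carrier type 'a (as disjoint sets S and T). Markings are functions 'a => nat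
(multisets on S, possibly with infinite support); states are finite multisets
of transitions.\<close>

record ('a, 'l) cnet =
  places :: "'a set"
  trans :: "'a set"
  flow :: "('a \<times> 'a) set"
  inhib :: "('a \<times> 'a) set"
  readarc :: "('a \<times> 'a) set"
  init :: "'a \<Rightarrow> nat"
  lab :: "'a \<Rightarrow> 'l"

definition pre :: "('a, 'l) cnet \<Rightarrow> 'a \<Rightarrow> 'a set" where
  "pre N x = {y. (y, x) \<in> flow N}"

definition post :: "('a, 'l) cnet \<Rightarrow> 'a \<Rightarrow> 'a set" where
  "post N x = {y. (x, y) \<in> flow N}"

definition inh :: "('a, 'l) cnet \<Rightarrow> 'a \<Rightarrow> 'a set" where
  "inh N t = {s. (s, t) \<in> inhib N}"

definition rd :: "('a, 'l) cnet \<Rightarrow> 'a \<Rightarrow> 'a set" where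
  "rd N t = {s. (s, t) \<in> readarc N}"

definition wf_net :: "('a, 'l) cnet \<Rightarrow> bool" where
  "wf_net N \<longleftrightarrow>
     places N \<inter> trans N = {} \<and>
     flow N \<subseteq> (places N \<times> trans N) \<union> (trans N \<times> places N) \<and>
     inhib N \<subseteq> places N \<times> trans N \<and>
     readarc N \<subseteq> places N \<times> trans N \<and>
     (\<forall>s. init N s > 0 \<longrightarrow> s \<in> places N) \<and>
     (\<forall>t \<in> trans N. pre N t \<noteq> {})"

definition enabled :: "('a, 'l) cnet \<Rightarrow> ('a \<Rightarrow> nat) \<Rightarrow> 'a \<Rightarrow> bool" where
  "enabled N m t \<longleftrightarrow> t \<in> trans N \<and>
     (\<forall>s. (if s \<in> pre N t then 1 else 0) + (if s \<in> rd N t then 1 else 0) \<le> m s) \<and>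
     (\<forall>s \<in> inh N t. m s = 0)"

definition fire :: "('a, 'l) cnet \<Rightarrow> ('a \<Rightarrow> nat) \<Rightarrow> 'a \<Rightarrow> ('a \<Rightarrow> nat)" where
  "fire N m t = (\<lambda>s. m s - (if s \<in> pre N t then 1 else 0) + (if s \<in> post N t then 1 else 0))"

fun firing_seq :: "('a, 'l) cnet \<Rightarrow> ('a \<Rightarrow> nat) \<Rightarrow> 'a list \<Rightarrow> ('a \<Rightarrow> nat) \<Rightarrow> bool" where
  "firing_seq N m [] m' \<longleftrightarrow> m' = m"
| "firing_seq N m (t # ts) m' \<longleftrightarrow> enabled N m t \<and> firing_seq N (fire N m t) ts m'"

definition reachable :: "('a, 'l) cnet \<Rightarrow> ('a \<Rightarrow> nat) set" where
  "reachable N = {m. \<exists>ts. firing_seq N (init N) ts m}"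

definition safe :: "('a, 'l) cnet \<Rightarrow> bool" where
  "safe N \<longleftrightarrow> (\<forall>m \<in> reachable N. \<forall>s. m s \<le> 1)"

definition states :: "('a, 'l) cnet \<Rightarrow> 'a multiset set" where
  "states N = {mset ts | ts. \<exists>m. firing_seq N (init N) ts m}"

definition prec :: "('a, 'l) cnet \<Rightarrow> ('a \<times> 'a) set" where
  "prec N = {(t, t'). t \<in> trans N \<and> t' \<in> trans N \<and>
      (pre N t \<inter> inh N t' \<noteq> {} \<or> post N t \<inter> rd N t' \<noteq> {})}"

definition conflict :: "('a, 'l) cnet \<Rightarrow> 'a \<Rightarrow> 'a \<Rightarrow> bool" where
  "conflict N t t' \<longleftrightarrow> \<not> (\<exists>X \<in> states N. t \<in># X \<and> t' \<in># X)"

definition pre_causal :: "('a, 'l) cnet \<Rightarrow> bool" where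
  "pre_causal N \<longleftrightarrow>
     (flow N)\<^sup>+ \<inter> (trans N \<times> trans N) = {} \<and>
     (\<forall>t \<in> trans N. pre N t \<inter> inh N t = {} \<and> post N t \<inter> rd N t = {}) \<and>
     (\<forall>t \<in> trans N. \<forall>s \<in> inh N t. \<exists>l. lab N ` post N s = {l}) \<and>
     (\<forall>t t'. (t, t') \<in> prec N \<longrightarrow> (t', t) \<notin> prec N) \<and>
     (\<forall>t \<in> trans N. finite (inh N t \<union> rd N t)) \<and>
     (\<forall>t \<in> trans N. \<forall>t' \<in> trans N. conflict N t t' \<longrightarrow> pre N t \<inter> pre N t' \<noteq> {}) \<and>
     (\<forall>t \<in> trans N. \<forall>t' \<in> trans N. t \<noteq> t' \<and> lab N t = lab N t' \<longrightarrow> conflict N t t')"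

definition causal_net :: "('a, 'l) cnet \<Rightarrow> bool" where
  "causal_net N \<longleftrightarrow> pre_causal N \<and>
     (\<forall>X \<in> states N.
        partial_order_on (set_mset X)
          (((prec N \<inter> set_mset X \<times> set_mset X)\<^sup>*) \<inter> set_mset X \<times> set_mset X)) \<and>
     (\<forall>t \<in> trans N. \<exists>X \<in> states N. t \<in># X)"

definition single_execution :: "('a, 'l) cnet \<Rightarrow> bool" where
  "single_execution N \<longleftrightarrow> (\<forall>X \<in> states N. \<forall>t. count X t \<le> 1)"

end

theory Submission
  imports Defs
begin

text \<open>A place in the preset of a transition t has no producing transition, since that
  transition would precede t in the flow relation. Its token count therefore only
  decreases along a firing sequence, and every occurrence of t removes one token. As
  the initial marking is safe, t occurs at most once.\<close>

lemma firing_seq_trans: "firing_seq N m ts m' \<Longrightarrow> set ts \<subseteq> trans N"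
  by (induction ts arbitrary: m) (auto simp: enabled_def)

lemma safe_init_le_one:
  assumes "safe N"
  shows "init N s \<le> 1"
proof -
  have "init N \<in> reachable N"
    unfolding reachable_def by (auto intro: exI[of _ "[]"])
  then show ?thesis using assms unfolding safe_def by blast
qed

lemma pre_place_unproduced:
  assumes "pre_causal N" and "t \<in> trans N" and "s \<in> pre N t"
  shows "\<forall>t'\<in>trans N. s \<notin> post N t'"
proof (intro ballI notI)
  fix t' assume t': "t' \<in> trans N" and "s \<in> post N t'"
  with assms(3) have "(t', t) \<in> (flow N)\<^sup>+"
    unfolding pre_def post_def by auto
  with assms(1,2) t' show False unfolding pre_causal_def by blast
qed

lemma firing_seq_count_le_marking:
  assumes unproduced: "\<forall>t'\<in>trans N. s \<notin> post N t'" and s: "s \<in> pre N t"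
  shows "firing_seq N m ts m' \<Longrightarrow> count (mset ts) t + m' s \<le> m s"
proof (induction ts arbitrary: m)
  case Nil
  then show ?case by simp
next
  case (Cons t0 ts)
  then have en: "enabled N m t0" and fs: "firing_seq N (fire N m t0) ts m'" by auto
  have consumed: "(if s \<in> pre N t0 then 1 else 0) \<le> m s"
    using en unfolding enabled_def by (metis add_leD1)
  have "s \<notin> post N t0" using unproduced en by (simp add: enabled_def)
  then have "fire N m t0 s = m s - (if s \<in> pre N t0 then 1 else 0)"
    by (simp add: fire_def)
  with Cons.IH[OF fs] consumed s show ?case by (cases "t0 = t") auto
qed

lemma safe_pre_causal_single_execution:
  assumes "wf_net N" and "safe N" and "pre_causal N"
  shows "single_execution N"
  unfolding single_execution_def
proof (intro ballI allI)
  fix X t assume "X \<in> states N"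
  then obtain ts m' where X: "X = mset ts" and fs: "firing_seq N (init N) ts m'"
    unfolding states_def by auto
  show "count X t \<le> 1"
  proof (cases "t \<in> trans N")
    case False
    with firing_seq_trans[OF fs] X have "count X t = 0" by (auto simp: count_eq_zero_iff)
    then show ?thesis by simp
  next
    case True
    with assms(1) obtain s where s: "s \<in> pre N t" unfolding wf_net_def by blast
    with firing_seq_count_le_marking[OF pre_place_unproduced[OF assms(3) True s] s fs]
      safe_init_le_one[OF assms(2), of s] X
    show ?thesis by simp
  qed
qed

theorem mainTheorem5:
  fixes K :: "('a, 'l) cnet"
  assumes "wf_net K" and "safe K" and "causal_net K"
  shows "single_execution K"
  using safe_pre_causal_single_execution assms unfolding causal_net_def by blast

end
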